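(* Consider the two-station pricing game described in the context, and assume that for each $i\in\{1,2\}$ (with $j\ne i$): $\mathcal{B}_i$ is monotonically increasing (non-decreasing) on $[p_{\min},p_{\max}]$; $p_j\mapsto\mathcal{B}_i(p_j)-p_j$ is strictly decreasing on $[p_{\min},p_{\max}]$; and $\mathcal{B}_i(\mathcal{B}_j(p_{\min}))\ge p_{\min}$, $\mathcal{B}_i(\mathcal{B}_j(p_{\max}))\le p_{\max}$. Let $(p_1^*,p_2^* )$ be the (unique) pure-strategy pricing equilibrium, and for $i\ne j$ let $\Theta_i(p_i)=\mathcal{B}_i(\mathcal{B}_j(p_i))-p_i$. Then for every $p_i\in[p_{\min},p_{\max}]$: $\Theta_i(p_i)<0$ if $p_i>p_i^*$, and $\Theta_i(p_i)>0$ if $p_i<p_i^*$.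
   Context: Two charging stations $i\in\{1,2\}$ simultaneously choose prices $p_i\in[p_{\min},p_{\max}]$. Station $i$'s payoff is $Q_i(p_i,p_j)=(p_i-c_i)D_i(p_i,p_j)-\check c_i$ ($j\ne i$), where $c_i\le p_{\min}$ is its unit electricity cost, $\check c_i$ a fixed cost, and $D_i(p_i,p_j)$ the demand it receives from the PEVs' station-selection equilibrium under prices $(p_i,p_j)$. A best-response function of station $i$ is a function $\mathcal{B}_i:[p_{\min},p_{\max}]\to[p_{\min},p_{\max}]$ with $\mathcal{B}_i(p_j)\in\arg\max_{p_i\in[p_{\min},p_{\max}]}Q_i(p_i,p_j)$. A pure-strategy pricing equilibrium is a pair $(p_1^*,p_2^* )$ with $p_1^*=\mathcal{B}_1(p_2^* )$ and $p_2^*=\mathcal{B}_2(p_1^* )$. *)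

theory Defs
  imports Complex_Main
begin

text \<open>Payoff of a station: Q(p_i,p_j) = (p_i - c) * D(p_i,p_j) - cfix,
  where D(p_i,p_j) is the demand the station receives under prices (own, other).\<close>
definition payoff :: "real \<Rightarrow> real \<Rightarrow> (real \<Rightarrow> real \<Rightarrow> real) \<Rightarrow> real \<Rightarrow> real \<Rightarrow> real" where
  "payoff c cfix D p_own p_oth = (p_own - c) * D p_own p_oth - cfix"

definition is_best_response :: "real \<Rightarrow> real \<Rightarrow> (real \<Rightarrow> real \<Rightarrow> real) \<Rightarrow> (real \<Rightarrow> real) \<Rightarrow> bool" where
  "is_best_response pmin pmax Q B \<longleftrightarrow>
     (\<forall>p_oth\<in>{pmin..pmax}. B p_oth \<in> {pmin..pmax} \<and> (\<forall>p_own\<in>{pmin..pmax}. Q p_own p_oth \<le> Q (B p_oth) p_oth))"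

definition is_pricing_equilibrium :: "real \<Rightarrow> real \<Rightarrow> (real \<Rightarrow> real) \<Rightarrow> (real \<Rightarrow> real) \<Rightarrow> real \<Rightarrow> real \<Rightarrow> bool" where
  "is_pricing_equilibrium pmin pmax B1 B2 p1 p2 \<longleftrightarrow>
     p1 \<in> {pmin..pmax} \<and> p2 \<in> {pmin..pmax} \<and> p1 = B1 p2 \<and> p2 = B2 p1"

end

theory Submission
  imports Defs
begin

text \<open>The equilibrium price \<open>p\<^sub>i\<^sup>*\<close> is a fixed point of \<open>\<B>\<^sub>i \<circ> \<B>\<^sub>j\<close>, i.e. a zero of
  \<open>\<Theta>\<^sub>i\<close>. Since \<open>\<B>\<^sub>j\<close> is non-decreasing and both \<open>\<B>\<^sub>i - id\<close> and \<open>\<B>\<^sub>j - id\<close> strictly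
  decrease, \<open>\<Theta>\<^sub>i = (\<B>\<^sub>i - id) \<circ> \<B>\<^sub>j + (\<B>\<^sub>j - id)\<close> strictly decreases, so it is negative to the
  right of its zero and positive to the left. The payoff structure and the boundary
  conditions on \<open>\<B>\<^sub>i \<circ> \<B>\<^sub>j\<close> are only needed for existence of the equilibrium, which is
  assumed here.\<close>

definition strictly_decreasing_on :: "real set \<Rightarrow> (real \<Rightarrow> real) \<Rightarrow> bool" where
  "strictly_decreasing_on S f \<longleftrightarrow> (\<forall>x\<in>S. \<forall>y\<in>S. x < y \<longrightarrow> f y < f x)"

lemma strictly_decreasing_on_diff_compose:
  fixes B C :: "real \<Rightarrow> real"
  assumes C_into: "C ` S \<subseteq> S"
    and C_mono: "mono_on S C"
    and B_dec: "strictly_decreasing_on S (\<lambda>x. B x - x)"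
    and C_dec: "strictly_decreasing_on S (\<lambda>x. C x - x)"
  shows "strictly_decreasing_on S (\<lambda>x. B (C x) - x)"
  unfolding strictly_decreasing_on_def
proof (intro ballI impI)
  fix x y assume x: "x \<in> S" and y: "y \<in> S" and "x < y"
  then have C_le: "C x \<le> C y" and C_step: "C y - y < C x - x"
    using C_mono C_dec by (auto simp: mono_on_def strictly_decreasing_on_def)
  have "B (C y) - C y \<le> B (C x) - C x"
  proof (cases "C x = C y")
    case False
    with C_le have "C x < C y" by simp
    moreover have "C x \<in> S" "C y \<in> S" using x y C_into by auto
    ultimately show ?thesis
      using B_dec unfolding strictly_decreasing_on_def by (meson less_imp_le)
  qed simp
  with C_step show "B (C y) - y < B (C x) - x" by linarith
qed

lemma strictly_decreasing_on_sign_around_zero: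
  assumes "strictly_decreasing_on S f" "x0 \<in> S" "f x0 = 0" "x \<in> S"
  shows "x > x0 \<Longrightarrow> f x < 0" and "x < x0 \<Longrightarrow> f x > 0"
  using assms unfolding strictly_decreasing_on_def by fastforce+

lemma best_response_into:
  assumes "is_best_response pmin pmax Q B"
  shows "B ` {pmin..pmax} \<subseteq> {pmin..pmax}"
  using assms unfolding is_best_response_def by blast

theorem proposition1:
  fixes pmin pmax c1 c2 cf1 cf2 p1s p2s :: real
    and D1 D2 :: "real \<Rightarrow> real \<Rightarrow> real"
    and B1 B2 :: "real \<Rightarrow> real"
  assumes interval: "pmin \<le> pmax"
    and costs: "c1 \<le> pmin" "c2 \<le> pmin"
    and br1: "is_best_response pmin pmax (payoff c1 cf1 D1) B1"
    and br2: "is_best_response pmin pmax (payoff c2 cf2 D2) B2"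
    and mono1: "mono_on {pmin..pmax} B1"
    and mono2: "mono_on {pmin..pmax} B2"
    and sdec1: "\<And>x y. x \<in> {pmin..pmax} \<Longrightarrow> y \<in> {pmin..pmax} \<Longrightarrow> x < y \<Longrightarrow> B1 y - y < B1 x - x"
    and sdec2: "\<And>x y. x \<in> {pmin..pmax} \<Longrightarrow> y \<in> {pmin..pmax} \<Longrightarrow> x < y \<Longrightarrow> B2 y - y < B2 x - x"
    and bnd1: "B1 (B2 pmin) \<ge> pmin" "B1 (B2 pmax) \<le> pmax"
    and bnd2: "B2 (B1 pmin) \<ge> pmin" "B2 (B1 pmax) \<le> pmax"
    and eq: "is_pricing_equilibrium pmin pmax B1 B2 p1s p2s"
  shows "\<forall>p\<in>{pmin..pmax}.
           (p > p1s \<longrightarrow> B1 (B2 p) - p < 0) \<and> (p < p1s \<longrightarrow> B1 (B2 p) - p > 0) \<and>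
           (p > p2s \<longrightarrow> B2 (B1 p) - p < 0) \<and> (p < p2s \<longrightarrow> B2 (B1 p) - p > 0)"
proof -
  have dec1: "strictly_decreasing_on {pmin..pmax} (\<lambda>x. B1 x - x)"
    and dec2: "strictly_decreasing_on {pmin..pmax} (\<lambda>x. B2 x - x)"
    using sdec1 sdec2 unfolding strictly_decreasing_on_def by blast+
  have theta1: "strictly_decreasing_on {pmin..pmax} (\<lambda>x. B1 (B2 x) - x)"
    using strictly_decreasing_on_diff_compose[OF best_response_into[OF br2] mono2 dec1 dec2] .
  have theta2: "strictly_decreasing_on {pmin..pmax} (\<lambda>x. B2 (B1 x) - x)"
    using strictly_decreasing_on_diff_compose[OF best_response_into[OF br1] mono1 dec2 dec1] .
  have p1s_in: "p1s \<in> {pmin..pmax}" and p2s_in: "p2s \<in> {pmin..pmax}"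
    and fix1: "p1s = B1 p2s" and fix2: "p2s = B2 p1s"
    using eq unfolding is_pricing_equilibrium_def by blast+
  have p1s: "p1s \<in> {pmin..pmax}" "B1 (B2 p1s) - p1s = 0"
    and p2s: "p2s \<in> {pmin..pmax}" "B2 (B1 p2s) - p2s = 0"
    using p1s_in p2s_in by (simp_all only: fix1[symmetric] fix2[symmetric] diff_self)
  show ?thesis
  proof (intro ballI conjI impI)
    fix p assume p: "p \<in> {pmin..pmax}"
    note sign1 = strictly_decreasing_on_sign_around_zero[OF theta1 p1s p]
    note sign2 = strictly_decreasing_on_sign_around_zero[OF theta2 p2s p]
    show "p > p1s \<Longrightarrow> B1 (B2 p) - p < 0" "p < p1s \<Longrightarrow> B1 (B2 p) - p > 0"
      using sign1 by simp_all
    show "p > p2s \<Longrightarrow> B2 (B1 p) - p < 0" "p < p2s \<Longrightarrow> B2 (B1 p) - p > 0"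
      using sign2 by simp_all
  qed
qed

end
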